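(* Let $\phi$ be an LTL formula that is satisfiable. Then every finished tableau for $\phi$ is successful, i.e. it has at least one ticked leaf. This holds regardless of the order in which leaves are chosen for extension, regardless of which applicable static rule is used at each step, and regardless of which pivot formula it is applied to.
   Context: LTL formulas over a countable set $AP$ of atoms are built from atoms $p\in AP$ and the constant $\top$ using $\neg\alpha$, $\alpha\wedge\beta$, $X\alpha$ and $\alpha U\beta$. We write $\bot$ for $\neg\top$. A structure is a triple $(S,R,g)$ where $S$ is a finite set, $R\subseteq S\times S$ is serial (every state has an $R$-successor), and $g:S\to 2^{AP}$. A fullpath is a sequence $\sigma=\langle s_0,s_1,\dots\rangle$ with $(s_i,s_{i+1})\in R$ for all $i$. We write $\sigma_i=s_i$ and $\sigma_{\ge j}=\langle s_j,s_{j+1},\dots\rangle$. Truth is defined as follows: - $\sigma\models p$ iff $p\in g(\sigma_0)$; - $\sigma\models\top$ always; - $\neg$ and $\wedge$ are classical; - $\sigma\models X\alpha$ iff $\sigma_{\ge1}\models\alpha$; - $\sigma\models\alpha U\beta$ iff there is $i\ge0$ with $\sigma_{\ge i}\models\beta$ and $\sigma_{\ge j}\models\alpha$ for all $0\le j<i$. A formula is satisfiable iff it is true on some fullpath of some structure. Tableau. A tableau for $\phi$ is a finite rooted tree. Each node $u$ carries a finite set of formulas $\Gamma_u$ (its label), and the root is labelled $\{\phi\}$. We write $u<v$ when $u$ is a proper ancestor of $v$ and $u\le v$ when it is an ancestor or equal. A formula is elementary if it is an atom, a negated atom, or of the form $X\alpha$ or $\neg X\alpha$. A label is poised if it is nonempty,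 contains no pair $\alpha,\neg\alpha$, and all its formulas are elementary. An $X$-eventuality of a poised label is a member of the form $X(\alpha U\beta)$. Static rules are written "parent label / children", where $\{\chi\}\mathbin{\dot\cup}\Delta$ means $\chi\notin\Delta$: - EMPTY: $\{\}$ / tick. - CONTRADICTION: $\{\alpha,\neg\alpha\}\mathbin{\dot\cup}\Delta$ / cross. - $\neg\top$: $\{\neg\top\}\mathbin{\dot\cup}\Delta$ / cross. - $\top$: $\{\top\}\mathbin{\dot\cup}\Delta$ / $\Delta$. - $\wedge$: $\{\alpha\wedge\beta\}\mathbin{\dot\cup}\Delta$ / $\Delta\cup\{\alpha,\beta\}$. - $U$: $\{\alpha U\beta\}\mathbin{\dot\cup}\Delta$ / two children $\Delta\cup\{\beta\}$ and $\Delta\cup\{\alpha,X(\alpha U\beta)\}$. - $\neg\neg$: $\{\neg\neg\alpha\}\mathbin{\dot\cup}\Delta$ / $\Delta\cup\{\alpha\}$. - $\neg\wedge$: $\{\neg(\alpha\wedge\beta)\}\mathbin{\dot\cup}\Delta$ / two children $\Delta\cup\{\neg\alpha\}$ and $\Delta\cup\{\neg\beta\}$. - $\neg U$: $\{\neg(\alpha U\beta)\}\mathbin{\dot\cup}\Delta$ / two children $\Delta\cup\{\neg\alpha,\neg\beta\}$ and $\Delta\cup\{\neg\beta,X\neg(\alpha U\beta)\}$. Non-static rules apply only to a leaf $v$ with poised label. The first applicable one in the following list is used. - LOOP: if some $u<v$ has poised $\Gamma_u\supseteq\Gamma_v$, and for every $X(\alpha U\beta)\in\Gamma_u$ there is $w$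 with $u<w\le v$ and $\beta\in\Gamma_w$, then $v$ is ticked. - PRUNE: if $u<v'<v$ all have the same poised label $\Gamma$, and for every $X(\alpha U\beta)\in\Gamma$, whenever some $x$ with $v'<x\le v$ has $\beta\in\Gamma_x$ there is $y$ with $u<y\le v'$ and $\beta\in\Gamma_y$, then $v$ is crossed. - PRUNE$_0$: if $u<v$ share the same poised label $\Gamma$, $\Gamma$ contains at least one $X$-eventuality, and for no $X(\alpha U\beta)\in\Gamma$ is there $x$ with $u<x\le v$ and $\beta\in\Gamma_x$, then $v$ is crossed. - TRANSITION: otherwise $v$ gets one child labelled $\{\alpha: X\alpha\in\Gamma_v\}\cup\{\neg\alpha:\neg X\alpha\in\Gamma_v\}$. A tableau is constructed from the root by repeatedly choosing any leaf that is neither ticked nor crossed and applying an applicable rule. For non-poised labels this means any applicable static rule to any suitable pivot formula. A tableau is finished if every leaf is ticked or crossed, and successful if some leaf is ticked. *)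

theory Defs
  imports Main "HOL-Library.Countable"
begin

datatype 'a ltl = Atom 'a | Top | Neg "'a ltl" | And "'a ltl" "'a ltl"
  | Nxt "'a ltl" | Until "'a ltl" "'a ltl"

definition suffix :: "nat \<Rightarrow> (nat \<Rightarrow> 's) \<Rightarrow> (nat \<Rightarrow> 's)" where
  "suffix j \<sigma> = (\<lambda>i. \<sigma> (j + i))"

fun sat :: "('s \<Rightarrow> 'a set) \<Rightarrow> (nat \<Rightarrow> 's) \<Rightarrow> 'a ltl \<Rightarrow> bool" where
  "sat g \<sigma> (Atom p) = (p \<in> g (\<sigma> 0))"
| "sat g \<sigma> Top = True"
| "sat g \<sigma> (Neg a) = (\<not> sat g \<sigma> a)"
| "sat g \<sigma> (And a b) = (sat g \<sigma> a \<and> sat g \<sigma> b)"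
| "sat g \<sigma> (Nxt a) = sat g (suffix 1 \<sigma>) a"
| "sat g \<sigma> (Until a b) =
     (\<exists>i. sat g (suffix i \<sigma>) b \<and> (\<forall>j<i. sat g (suffix j \<sigma>) a))"

definition is_structure :: "'s set \<Rightarrow> ('s \<times> 's) set \<Rightarrow> bool" where
  "is_structure S R \<longleftrightarrow> finite S \<and> R \<subseteq> S \<times> S \<and> (\<forall>s\<in>S. \<exists>t. (s, t) \<in> R)"

definition fullpath :: "('s \<times> 's) set \<Rightarrow> (nat \<Rightarrow> 's) \<Rightarrow> bool" where
  "fullpath R \<sigma> \<longleftrightarrow> (\<forall>i. (\<sigma> i, \<sigma> (Suc i)) \<in> R)"

text \<open>States are taken from nat; every finite state set can be encoded this way.\<close>
definition satisfiable :: "'a ltl \<Rightarrow> bool" where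
  "satisfiable \<phi> \<longleftrightarrow> (\<exists>(S::nat set) R g \<sigma>. is_structure S R \<and> fullpath R \<sigma> \<and> sat g \<sigma> \<phi>)"

fun elementary :: "'a ltl \<Rightarrow> bool" where
  "elementary (Atom p) = True"
| "elementary (Neg (Atom p)) = True"
| "elementary (Nxt a) = True"
| "elementary (Neg (Nxt a)) = True"
| "elementary _ = False"

definition poised :: "'a ltl set \<Rightarrow> bool" where
  "poised \<Gamma> \<longleftrightarrow> \<Gamma> \<noteq> {} \<and> \<not> (\<exists>a. a \<in> \<Gamma> \<and> Neg a \<in> \<Gamma>) \<and> (\<forall>f\<in>\<Gamma>. elementary f)"

datatype mark = Tick | Cross

text \<open>Outcome of applying a rule to a leaf: it is ticked/crossed, or gets children
  with the listed labels (child i is node v @ [i]).\<close>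
datatype 'a outcome = Close mark | Kids "'a ltl set list"

definition static_step :: "'a ltl set \<Rightarrow> 'a outcome \<Rightarrow> bool" where
  "static_step \<Gamma> out \<longleftrightarrow>
     (\<Gamma> = {} \<and> out = Close Tick)
   \<or> (\<exists>a. a \<in> \<Gamma> \<and> Neg a \<in> \<Gamma> \<and> out = Close Cross)
   \<or> (Neg Top \<in> \<Gamma> \<and> out = Close Cross)
   \<or> (Top \<in> \<Gamma> \<and> out = Kids [\<Gamma> - {Top}])
   \<or> (\<exists>a b. And a b \<in> \<Gamma> \<and> out = Kids [(\<Gamma> - {And a b}) \<union> {a, b}])
   \<or> (\<exists>a b. Until a b \<in> \<Gamma> \<and>
        out = Kids [(\<Gamma> - {Until a b}) \<union> {b}, (\<Gamma> - {Until a b}) \<union> {a, Nxt (Until a b)}])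
   \<or> (\<exists>a. Neg (Neg a) \<in> \<Gamma> \<and> out = Kids [(\<Gamma> - {Neg (Neg a)}) \<union> {a}])
   \<or> (\<exists>a b. Neg (And a b) \<in> \<Gamma> \<and>
        out = Kids [(\<Gamma> - {Neg (And a b)}) \<union> {Neg a}, (\<Gamma> - {Neg (And a b)}) \<union> {Neg b}])
   \<or> (\<exists>a b. Neg (Until a b) \<in> \<Gamma> \<and>
        out = Kids [(\<Gamma> - {Neg (Until a b)}) \<union> {Neg a, Neg b},
                    (\<Gamma> - {Neg (Until a b)}) \<union> {Neg b, Nxt (Neg (Until a b))}])"

definition anc :: "nat list \<Rightarrow> nat list \<Rightarrow> bool" where
  "anc u v \<longleftrightarrow> (\<exists>w. w \<noteq> [] \<and> v = u @ w)"

definition anc_eq :: "nat list \<Rightarrow> nat list \<Rightarrow> bool" where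
  "anc_eq u v \<longleftrightarrow> (\<exists>w. v = u @ w)"

definition loop_cond :: "(nat list \<Rightarrow> 'a ltl set) \<Rightarrow> nat list \<Rightarrow> bool" where
  "loop_cond lab v \<longleftrightarrow> (\<exists>u. anc u v \<and> poised (lab u) \<and> lab v \<subseteq> lab u \<and>
     (\<forall>a b. Nxt (Until a b) \<in> lab u \<longrightarrow> (\<exists>w. anc u w \<and> anc_eq w v \<and> b \<in> lab w)))"

definition prune_cond :: "(nat list \<Rightarrow> 'a ltl set) \<Rightarrow> nat list \<Rightarrow> bool" where
  "prune_cond lab v \<longleftrightarrow> (\<exists>u v'. anc u v' \<and> anc v' v \<and> lab u = lab v \<and> lab v' = lab v \<and>
     poised (lab v) \<and>
     (\<forall>a b. Nxt (Until a b) \<in> lab v \<longrightarrow>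
        (\<exists>x. anc v' x \<and> anc_eq x v \<and> b \<in> lab x) \<longrightarrow>
        (\<exists>y. anc u y \<and> anc_eq y v' \<and> b \<in> lab y)))"

definition prune0_cond :: "(nat list \<Rightarrow> 'a ltl set) \<Rightarrow> nat list \<Rightarrow> bool" where
  "prune0_cond lab v \<longleftrightarrow> (\<exists>u. anc u v \<and> lab u = lab v \<and> poised (lab v) \<and>
     (\<exists>a b. Nxt (Until a b) \<in> lab v) \<and>
     \<not> (\<exists>a b x. Nxt (Until a b) \<in> lab v \<and> anc u x \<and> anc_eq x v \<and> b \<in> lab x))"

definition transition_label :: "'a ltl set \<Rightarrow> 'a ltl set" where
  "transition_label \<Gamma> = {a. Nxt a \<in> \<Gamma>} \<union> {Neg a | a. Neg (Nxt a) \<in> \<Gamma>}"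

definition nonstatic_step :: "(nat list \<Rightarrow> 'a ltl set) \<Rightarrow> nat list \<Rightarrow> 'a outcome" where
  "nonstatic_step lab v =
     (if loop_cond lab v then Close Tick
      else if prune_cond lab v then Close Cross
      else if prune0_cond lab v then Close Cross
      else Kids [transition_label (lab v)])"

definition leaf :: "nat list set \<Rightarrow> nat list \<Rightarrow> bool" where
  "leaf N v \<longleftrightarrow> v \<in> N \<and> (\<forall>i. v @ [i] \<notin> N)"

definition apply_outcome ::
  "nat list set \<Rightarrow> (nat list \<Rightarrow> 'a ltl set) \<Rightarrow> (nat list \<Rightarrow> mark option) \<Rightarrow> nat list \<Rightarrow> 'a outcome
   \<Rightarrow> nat list set \<times> (nat list \<Rightarrow> 'a ltl set) \<times> (nat list \<Rightarrow> mark option)" where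
  "apply_outcome N lab mk v out = (case out of
      Close m \<Rightarrow> (N, lab, mk(v := Some m))
    | Kids ls \<Rightarrow> (N \<union> {v @ [i] | i. i < length ls},
                 (\<lambda>w. if (\<exists>i<length ls. w = v @ [i]) then ls ! last w else lab w),
                 mk))"

inductive tableau :: "'a ltl \<Rightarrow> nat list set \<Rightarrow> (nat list \<Rightarrow> 'a ltl set) \<Rightarrow> (nat list \<Rightarrow> mark option) \<Rightarrow> bool"
  for \<phi> where
  root: "tableau \<phi> {[]} (\<lambda>_. {\<phi>}) (\<lambda>_. None)"
| step: "tableau \<phi> N lab mk \<Longrightarrow> leaf N v \<Longrightarrow> mk v = None \<Longrightarrow>
         (if poised (lab v) then out = nonstatic_step lab v else static_step (lab v) out) \<Longrightarrow>
         tableau \<phi> (fst (apply_outcome N lab mk v out)) (fst (snd (apply_outcome N lab mk v out)))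
                   (snd (snd (apply_outcome N lab mk v out)))"

definition finished :: "nat list set \<Rightarrow> (nat list \<Rightarrow> mark option) \<Rightarrow> bool" where
  "finished N mk \<longleftrightarrow> (\<forall>v. leaf N v \<longrightarrow> mk v \<noteq> None)"

definition successful :: "nat list set \<Rightarrow> (nat list \<Rightarrow> mark option) \<Rightarrow> bool" where
  "successful N mk \<longleftrightarrow> (\<exists>v. leaf N v \<and> mk v = Some Tick)"

end

theory Submission
  imports Defs "HOL-Library.Sublist" "HOL-Library.Infinite_Set"
begin

text \<open>
  Suppose a path \<sigma> satisfies \<phi> but the finished tableau has no ticked leaf. Follow \<sigma>
  through the tableau: at a node expanded by a static rule enter a child whose label holds at the
  current time (the static rules are sound), at a poised node take the transition and advance
  time. Every leaf reached is satisfiable, so it was crossed by PRUNE or PRUNE_0; it is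
  then poised, and the run jumps back from it to the node v of that rule, which has the same label.
  This run never stops, and time grows without bound.

  Let w be a shortest node that is infinitely often the node u of the rule crossing the leaf;
  from some point on the run stays below w. LOOP did not tick those leaves, so each of them leaves
  some eventuality X(a U b) of w unfulfilled between w and the leaf. Jumping back never erases a
  fulfilment below w (the PRUNE side condition), so along the run b stays false at every time
  since the run settled below w, as long as the eventuality is unfulfilled. Some eventuality
  is unfulfilled at infinitely many of these leaves, yet \<sigma> fulfils it at a fixed time.
\<close>

(* Sublist.suffix would shadow the path suffix of Defs. *)
hide_const (open) Sublist.suffix

section \<open>Node addresses and the locality of the non-static rules\<close>

lemma anc_eq_is_prefix: "anc_eq = prefix"
  by (auto simp: fun_eq_iff anc_eq_def prefix_def)

lemma anc_is_strict_prefix: "anc = strict_prefix"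
  by (auto simp: fun_eq_iff anc_def strict_prefix_def prefix_def)

lemma nonstatic_step_cong:
  assumes "\<And>u. prefix u v \<Longrightarrow> lab' u = lab u"
  shows "nonstatic_step lab' v = nonstatic_step lab v"
proof -
  have below: "lab' u = lab u" if "prefix u v'" "strict_prefix v' v" for u v'
    using assms that prefix_order.trans prefix_order.less_imp_le by blast
  have "loop_cond lab' v = loop_cond lab v"
    unfolding loop_cond_def anc_is_strict_prefix anc_eq_is_prefix
    using assms below by (simp cong: conj_cong)
  moreover have "prune_cond lab' v = prune_cond lab v"
    unfolding prune_cond_def anc_is_strict_prefix anc_eq_is_prefix
    using assms below prefix_order.less_imp_le by (simp cong: conj_cong)
  moreover have "prune0_cond lab' v = prune0_cond lab v"
    unfolding prune0_cond_def anc_is_strict_prefix anc_eq_is_prefix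
    using assms below by (simp cong: conj_cong)
  ultimately show ?thesis
    unfolding nonstatic_step_def using assms by simp
qed

section \<open>Well-formed tableaux\<close>

definition rule_applied :: "(nat list \<Rightarrow> 'a ltl set) \<Rightarrow> nat list \<Rightarrow> 'a outcome \<Rightarrow> bool" where
  "rule_applied lab v out \<longleftrightarrow>
     (if poised (lab v) then out = nonstatic_step lab v else static_step (lab v) out)"

lemma rule_applied_cong:
  assumes "\<And>u. prefix u v \<Longrightarrow> lab' u = lab u"
  shows "rule_applied lab' v out = rule_applied lab v out"
  using assms[of v] nonstatic_step_cong[OF assms] by (simp add: rule_applied_def)

lemma rule_applied_poised_Kids:
  "rule_applied lab v (Kids ls) \<Longrightarrow> poised (lab v) \<Longrightarrow> ls = [transition_label (lab v)]"
  by (auto simp: rule_applied_def nonstatic_step_def split: if_splits)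

lemma finite_transition_label: "finite \<Gamma> \<Longrightarrow> finite (transition_label \<Gamma>)"
proof -
  assume "finite \<Gamma>"
  moreover have "{a. Nxt a \<in> \<Gamma>} = Nxt -` \<Gamma>" by auto
  moreover have "{Neg a | a. Neg (Nxt a) \<in> \<Gamma>} = Neg ` ((Neg \<circ> Nxt) -` \<Gamma>)" by auto
  ultimately show ?thesis
    unfolding transition_label_def by (auto intro!: finite_vimageI inj_onI)
qed

lemma rule_applied_Kids_finite:
  "rule_applied lab v (Kids ls) \<Longrightarrow> finite (lab v) \<Longrightarrow> l \<in> set ls \<Longrightarrow> finite l"
  unfolding rule_applied_def static_step_def
  by (auto simp: nonstatic_step_def finite_transition_label split: if_splits)

definition has_children ::
  "nat list set \<Rightarrow> (nat list \<Rightarrow> 'a ltl set) \<Rightarrow> nat list \<Rightarrow> 'a ltl set list \<Rightarrow> bool" where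
  "has_children N lab v ls \<longleftrightarrow>
     (\<forall>i. v @ [i] \<in> N \<longleftrightarrow> i < length ls) \<and> (\<forall>i<length ls. lab (v @ [i]) = ls ! i)"

definition wf_tableau ::
  "'a ltl \<Rightarrow> nat list set \<Rightarrow> (nat list \<Rightarrow> 'a ltl set) \<Rightarrow> (nat list \<Rightarrow> mark option) \<Rightarrow> bool" where
  "wf_tableau \<phi> N lab mk \<longleftrightarrow>
     [] \<in> N \<and> lab [] = {\<phi>} \<and> finite N \<and> (\<forall>v i. v @ [i] \<in> N \<longrightarrow> v \<in> N) \<and>
     (\<forall>v\<in>N. finite (lab v)) \<and>
     (\<forall>v\<in>N. (\<exists>i. v @ [i] \<in> N) \<longrightarrow> (\<exists>ls. rule_applied lab v (Kids ls) \<and> has_children N lab v ls)) \<and>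
     (\<forall>v m. mk v = Some m \<longrightarrow> v \<in> N \<and> rule_applied lab v (Close m))"

lemma prefix_closed:
  assumes "\<And>v i. v @ [i] \<in> N \<Longrightarrow> v \<in> N" and "prefix u v" and "v \<in> N"
  shows "u \<in> N"
proof -
  obtain w where "v = u @ w" using assms(2) by (auto simp: prefix_def)
  with assms(3) show ?thesis
    by (induction w arbitrary: v rule: rev_induct) (auto intro: assms(1) simp flip: append_assoc)
qed

lemma wf_tableau_close:
  assumes "wf_tableau \<phi> N lab mk" and "v \<in> N" and "rule_applied lab v (Close m)"
  shows "wf_tableau \<phi> N lab (mk(v := Some m))"
  using assms unfolding wf_tableau_def by auto

lemma wf_tableau_expand:
  assumes wf: "wf_tableau \<phi> N lab mk" and "leaf N v" and rule: "rule_applied lab v (Kids ls)"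
  defines "N' \<equiv> N \<union> {v @ [i] | i. i < length ls}"
    and "lab' \<equiv> \<lambda>w. if \<exists>i<length ls. w = v @ [i] then ls ! last w else lab w"
  shows "wf_tableau \<phi> N' lab' mk"
proof -
  have closed: "\<And>w i. w @ [i] \<in> N \<Longrightarrow> w \<in> N" and fin: "\<forall>w\<in>N. finite (lab w)"
    using wf by (auto simp: wf_tableau_def)
  have vN: "v \<in> N" and no_child: "\<And>i. v @ [i] \<notin> N"
    using \<open>leaf N v\<close> by (auto simp: leaf_def)
  have old: "lab' w = lab w" if "w \<in> N" for w
    using that no_child by (auto simp: lab'_def)
  have new: "lab' (v @ [i]) = ls ! i" if "i < length ls" for i
    using that by (auto simp: lab'_def)
  have rule_old: "rule_applied lab' w out = rule_applied lab w out" if "w \<in> N" for w out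
  proof (rule rule_applied_cong)
    fix u assume "prefix u w"
    show "lab' u = lab u" by (rule old[OF prefix_closed[OF closed \<open>prefix u w\<close> that]])
  qed
  have new_leaf: "w @ [j] \<notin> N'" if "w \<notin> N" for w j
    using that closed vN by (auto simp: N'_def)
  have children_old: "w @ [i] \<in> N' \<longleftrightarrow> w @ [i] \<in> N" if "w \<noteq> v" for w i
    using that by (auto simp: N'_def)
  show ?thesis
    unfolding wf_tableau_def
  proof (intro conjI ballI allI impI)
    show "[] \<in> N'" "lab' [] = {\<phi>}" "finite N'"
      using wf old by (auto simp: wf_tableau_def N'_def)
  next
    fix w i assume "w @ [i] \<in> N'"
    then show "w \<in> N'" using closed vN by (auto simp: N'_def)
  next
    fix w assume "w \<in> N'"
    then show "finite (lab' w)"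
      using fin old new rule_applied_Kids_finite[OF rule] vN by (auto simp: N'_def)
  next
    fix w assume "w \<in> N'" and "\<exists>i. w @ [i] \<in> N'"
    then have wN: "w \<in> N" using new_leaf by blast
    show "\<exists>ls. rule_applied lab' w (Kids ls) \<and> has_children N' lab' w ls"
    proof (cases "w = v")
      case True
      then show ?thesis
        using rule rule_old[OF wN] new no_child by (auto simp: has_children_def N'_def)
    next
      case False
      with \<open>\<exists>i. w @ [i] \<in> N'\<close> children_old have "\<exists>i. w @ [i] \<in> N" by blast
      with wN wf obtain ls' where "rule_applied lab w (Kids ls')" "has_children N lab w ls'"
        unfolding wf_tableau_def by blast
      then show ?thesis
        using rule_old[OF wN] children_old[OF False] old by (auto simp: has_children_def)
    qed
  next
    fix w m assume "mk w = Some m"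
    then show "w \<in> N'" using wf by (simp add: wf_tableau_def N'_def)
  next
    fix w m assume "mk w = Some m"
    then show "rule_applied lab' w (Close m)" using wf rule_old by (simp add: wf_tableau_def)
  qed
qed

lemma tableau_wf: "tableau \<phi> N lab mk \<Longrightarrow> wf_tableau \<phi> N lab mk"
proof (induction rule: tableau.induct)
  case root
  then show ?case by (simp add: wf_tableau_def)
next
  case (step N lab mk v out)
  then have "rule_applied lab v out" by (simp add: rule_applied_def)
  with step show ?case
  proof (cases out)
    case (Close m)
    with step \<open>rule_applied lab v out\<close> have "wf_tableau \<phi> N lab (mk(v := Some m))"
      by (simp add: leaf_def wf_tableau_close)
    with Close show ?thesis by (simp add: apply_outcome_def fun_upd_def)
  next
    case (Kids ls)
    with step \<open>rule_applied lab v out\<close> show ?thesis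
      by (simp add: apply_outcome_def wf_tableau_expand)
  qed
qed

section \<open>Soundness of the rules\<close>

definition models :: "('s \<Rightarrow> 'a set) \<Rightarrow> (nat \<Rightarrow> 's) \<Rightarrow> 'a ltl set \<Rightarrow> bool" where
  "models g \<sigma> \<Gamma> \<longleftrightarrow> (\<forall>f\<in>\<Gamma>. sat g \<sigma> f)"

lemma suffix_suffix [simp]: "suffix i (suffix j \<sigma>) = suffix (j + i) \<sigma>"
  by (simp add: Defs.suffix_def add.assoc)

lemma suffix_0 [simp]: "suffix 0 \<sigma> = \<sigma>"
  by (simp add: Defs.suffix_def)

lemma sat_Until_unfold:
  "sat g \<sigma> (Until a b) \<longleftrightarrow> sat g \<sigma> b \<or> (sat g \<sigma> a \<and> sat g (suffix 1 \<sigma>) (Until a b))"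
proof
  assume "sat g \<sigma> (Until a b)"
  then obtain i where "sat g (suffix i \<sigma>) b" "\<forall>j<i. sat g (suffix j \<sigma>) a" by auto
  then show "sat g \<sigma> b \<or> (sat g \<sigma> a \<and> sat g (suffix 1 \<sigma>) (Until a b))"
    by (cases i) (auto intro!: exI[of _ "i - 1"])
next
  assume "sat g \<sigma> b \<or> (sat g \<sigma> a \<and> sat g (suffix 1 \<sigma>) (Until a b))"
  then show "sat g \<sigma> (Until a b)"
  proof
    assume "sat g \<sigma> b"
    then show ?thesis by (auto intro!: exI[of _ 0])
  next
    assume "sat g \<sigma> a \<and> sat g (suffix 1 \<sigma>) (Until a b)"
    then obtain i where "sat g \<sigma> a" "sat g (suffix (Suc i) \<sigma>) b" "\<forall>j<i. sat g (suffix (Suc j) \<sigma>) a"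
      by auto
    then show ?thesis by (auto intro!: exI[of _ "Suc i"] simp: less_Suc_eq_0_disj)
  qed
qed

lemma static_step_Kids_sound:
  assumes "static_step \<Gamma> (Kids ls)" and "models g \<sigma> \<Gamma>"
  shows "\<exists>l\<in>set ls. models g \<sigma> l"
  using assms unfolding static_step_def models_def
  by (elim disjE exE conjE) (auto simp: sat_Until_unfold[of g \<sigma>] simp del: sat.simps(6))

lemma static_step_Cross_unsat: "static_step \<Gamma> (Close Cross) \<Longrightarrow> \<not> models g \<sigma> \<Gamma>"
  unfolding static_step_def models_def by (auto, metis sat.simps(3), metis sat.simps(2,3))

lemma static_step_keeps_Nxt: "static_step \<Gamma> (Kids ls) \<Longrightarrow> Nxt f \<in> \<Gamma> \<Longrightarrow> l \<in> set ls \<Longrightarrow> Nxt f \<in> l"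
  unfolding static_step_def by auto

lemma static_step_removes_Until:
  assumes "static_step \<Gamma> (Kids ls)" and "Until a b \<in> \<Gamma>" and "l \<in> set ls" and "Until a b \<notin> l"
  shows "ls = [\<Gamma> - {Until a b} \<union> {b}, \<Gamma> - {Until a b} \<union> {a, Nxt (Until a b)}]"
  using assms unfolding static_step_def by auto

lemma models_transition_label: "models g \<sigma> \<Gamma> \<Longrightarrow> models g (suffix 1 \<sigma>) (transition_label \<Gamma>)"
  unfolding models_def transition_label_def by auto

lemma poised_Until_notin: "poised \<Gamma> \<Longrightarrow> Until a b \<notin> \<Gamma>"
  unfolding poised_def by fastforce

section \<open>Eventualities and the prune rules\<close>

definition fulfilled :: "(nat list \<Rightarrow> 'a ltl set) \<Rightarrow> 'a ltl \<Rightarrow> nat list \<Rightarrow> nat list \<Rightarrow> bool" where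
  "fulfilled lab b u x \<longleftrightarrow> (\<exists>y. strict_prefix u y \<and> prefix y x \<and> b \<in> lab y)"

lemma fulfilled_mono_right: "fulfilled lab b u y \<Longrightarrow> prefix y x \<Longrightarrow> fulfilled lab b u x"
  unfolding fulfilled_def using prefix_order.trans by blast

lemma fulfilled_mono_left: "fulfilled lab b u y \<Longrightarrow> prefix w u \<Longrightarrow> fulfilled lab b w y"
  unfolding fulfilled_def using prefix_order.le_less_trans by blast

lemma fulfilled_at: "strict_prefix u x \<Longrightarrow> b \<in> lab x \<Longrightarrow> fulfilled lab b u x"
  unfolding fulfilled_def by blast

lemma not_loop_cond_unfulfilled:
  assumes "\<not> loop_cond lab x" and "strict_prefix u x" and "lab u = lab x" and "poised (lab x)"
  shows "\<exists>a b. Nxt (Until a b) \<in> lab u \<and> \<not> fulfilled lab b u x"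
  using assms unfolding loop_cond_def fulfilled_def anc_is_strict_prefix anc_eq_is_prefix
  by (metis subset_refl)

text \<open>The common content of PRUNE (u < v) and PRUNE_0 (u = v, nothing fulfilled after u).\<close>
definition prune_pair :: "(nat list \<Rightarrow> 'a ltl set) \<Rightarrow> nat list \<Rightarrow> nat list \<Rightarrow> nat list \<Rightarrow> bool" where
  "prune_pair lab x u v \<longleftrightarrow> prefix u v \<and> strict_prefix v x \<and> lab u = lab x \<and> lab v = lab x \<and>
     (\<forall>a b. Nxt (Until a b) \<in> lab x \<longrightarrow> fulfilled lab b v x \<longrightarrow> fulfilled lab b u v)"

lemma prune_cond_prune_pair: "prune_cond lab x \<Longrightarrow> \<exists>u v. prune_pair lab x u v"
  unfolding prune_cond_def prune_pair_def fulfilled_def anc_is_strict_prefix anc_eq_is_prefix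
  by (metis prefix_order.less_imp_le)

lemma prune0_cond_prune_pair: "prune0_cond lab x \<Longrightarrow> \<exists>u. prune_pair lab x u u"
  unfolding prune0_cond_def prune_pair_def fulfilled_def anc_is_strict_prefix anc_eq_is_prefix
  by auto

lemma finite_eventualities: "finite \<Gamma> \<Longrightarrow> finite {(a, b). Nxt (Until a b) \<in> \<Gamma>}"
proof -
  assume "finite \<Gamma>"
  moreover have "{(a, b). Nxt (Until a b) \<in> \<Gamma>} = (\<lambda>(a, b). Nxt (Until a b)) -` \<Gamma>" by auto
  ultimately show ?thesis
    by (auto intro!: finite_vimageI inj_onI)
qed

section \<open>A run through a failed tableau along a model\<close>

lemma eventually_recurring:
  fixes A :: "nat set"
  assumes "finite (f ` A)"
  obtains K where "\<And>n. n \<in> A \<Longrightarrow> K \<le> n \<Longrightarrow> infinite {m \<in> A. f m = f n}"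
proof -
  have "{n \<in> A. finite {m \<in> A. f m = f n}} = (\<Union>y \<in> {y \<in> f ` A. finite {m \<in> A. f m = y}}. {m \<in> A. f m = y})"
    by auto
  then have "finite {n \<in> A. finite {m \<in> A. f m = f n}}"
    using assms by auto
  then obtain K where K: "\<forall>n \<in> {n \<in> A. finite {m \<in> A. f m = f n}}. n < K"
    using finite_nat_set_iff_bounded by blast
  show ?thesis
  proof (rule that)
    fix n assume "n \<in> A" and "K \<le> n"
    show "infinite {m \<in> A. f m = f n}"
    proof
      assume "finite {m \<in> A. f m = f n}"
      with K \<open>n \<in> A\<close> have "n < K" by blast
      with \<open>K \<le> n\<close> show False by simp
    qed
  qed
qed

locale failed_tableau =
  fixes \<phi> :: "'a ltl" and N :: "nat list set" and lab :: "nat list \<Rightarrow> 'a ltl set"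
    and mk :: "nat list \<Rightarrow> mark option" and g :: "'s \<Rightarrow> 'a set" and \<sigma> :: "nat \<Rightarrow> 's"
  assumes wf: "wf_tableau \<phi> N lab mk"
    and finished: "finished N mk"
    and unsuccessful: "\<not> successful N mk"
    and model: "sat g \<sigma> \<phi>"
begin

lemma root_in: "[] \<in> N" and root_label: "lab [] = {\<phi>}" and finite_nodes: "finite N"
  and parent_in: "v @ [i] \<in> N \<Longrightarrow> v \<in> N" and finite_label: "v \<in> N \<Longrightarrow> finite (lab v)"
  using wf by (auto simp: wf_tableau_def)

lemma prefix_in: "prefix u v \<Longrightarrow> v \<in> N \<Longrightarrow> u \<in> N"
  using prefix_closed parent_in by blast

lemma internal_node:
  assumes "v @ [i] \<in> N"
  obtains ls where "rule_applied lab v (Kids ls)" and "has_children N lab v ls"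
  using wf assms parent_in unfolding wf_tableau_def by blast

lemma child_label:
  assumes "has_children N lab v ls" and "v @ [i] \<in> N"
  shows "lab (v @ [i]) \<in> set ls"
  using assms by (simp add: has_children_def)

lemma poised_child:
  assumes "v @ [i] \<in> N" and "poised (lab v)"
  shows "v @ [0] \<in> N" and "lab (v @ [0]) = transition_label (lab v)"
proof -
  obtain ls where "rule_applied lab v (Kids ls)" and children: "has_children N lab v ls"
    using assms(1) by (rule internal_node)
  with assms(2) have "ls = [transition_label (lab v)]"
    by (simp add: rule_applied_poised_Kids)
  with children show "v @ [0] \<in> N" and "lab (v @ [0]) = transition_label (lab v)"
    by (simp_all add: has_children_def)
qed

lemma crossed_leaf:
  assumes "leaf N x" and "models g \<rho> (lab x)"
  shows "poised (lab x)" and "\<not> loop_cond lab x" and "\<exists>u v. prune_pair lab x u v"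
proof -
  obtain m where m: "mk x = Some m"
    using finished assms(1) by (auto simp: finished_def)
  with unsuccessful assms(1) have "m = Cross"
    by (cases m) (auto simp: successful_def)
  with m wf have rule: "rule_applied lab x (Close Cross)"
    by (simp add: wf_tableau_def)
  with assms(2) static_step_Cross_unsat show poised: "poised (lab x)"
    unfolding rule_applied_def by metis
  with rule have "nonstatic_step lab x = Close Cross"
    by (simp add: rule_applied_def)
  then have "\<not> loop_cond lab x" and "prune_cond lab x \<or> prune0_cond lab x"
    by (auto simp: nonstatic_step_def split: if_splits)
  then show "\<not> loop_cond lab x" and "\<exists>u v. prune_pair lab x u v"
    using prune_cond_prune_pair prune0_cond_prune_pair by blast+
qed

lemma pending_eventuality_persists:
  assumes "Nxt (Until a b) \<in> lab w" and "prefix w x" and "x \<in> N" and "\<not> fulfilled lab b w x"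
  shows "Until a b \<in> lab x \<or> Nxt (Until a b) \<in> lab x"
proof -
  obtain zs where "x = w @ zs"
    using assms(2) by (auto simp: prefix_def)
  with assms(3,4) show ?thesis
  proof (induction zs arbitrary: x rule: rev_induct)
    case Nil
    then show ?case using assms(1) by simp
  next
    case (snoc z zs)
    define y where "y = w @ zs"
    have x: "x = y @ [z]" and "x \<in> N"
      using snoc.prems by (simp_all add: y_def)
    then have "y \<in> N" by (simp add: parent_in)
    have unfulfilled_y: "\<not> fulfilled lab b w y"
      using snoc.prems(2) fulfilled_mono_right[of lab b w y x] x by auto
    have "strict_prefix w x"
      by (simp add: x y_def strict_prefix_def)
    then have "b \<notin> lab x"
      using snoc.prems(2) fulfilled_at by blast
    from snoc.IH \<open>y \<in> N\<close> unfulfilled_y have IH: "Until a b \<in> lab y \<or> Nxt (Until a b) \<in> lab y"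
      by (simp add: y_def)
    obtain ls where rule: "rule_applied lab y (Kids ls)" and "has_children N lab y ls"
      using internal_node \<open>x \<in> N\<close> x by blast
    with \<open>x \<in> N\<close> x have lx: "lab x \<in> set ls"
      using child_label by blast
    show ?case
    proof (cases "poised (lab y)")
      case True
      with IH have "Nxt (Until a b) \<in> lab y"
        using poised_Until_notin by blast
      with True rule lx show ?thesis
        by (auto simp: transition_label_def dest: rule_applied_poised_Kids)
    next
      case False
      with rule have static: "static_step (lab y) (Kids ls)"
        by (simp add: rule_applied_def)
      show ?thesis
      proof (cases "Nxt (Until a b) \<in> lab y")
        case True
        with static lx show ?thesis using static_step_keeps_Nxt by blast
      next
        case False
        with IH have "Until a b \<in> lab y" by blast
        with static lx \<open>b \<notin> lab x\<close> show ?thesis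
          using static_step_removes_Until by fastforce
      qed
    qed
  qed
qed

definition sat_child :: "nat list \<Rightarrow> nat \<Rightarrow> nat" where
  "sat_child x t = (LEAST i. x @ [i] \<in> N \<and> models g (suffix t \<sigma>) (lab (x @ [i])))"

definition prune_base :: "nat list \<Rightarrow> nat list" where
  "prune_base x = fst (SOME p. prune_pair lab x (fst p) (snd p))"

definition prune_target :: "nat list \<Rightarrow> nat list" where
  "prune_target x = snd (SOME p. prune_pair lab x (fst p) (snd p))"

lemma prune_pair_chosen:
  "\<exists>u v. prune_pair lab x u v \<Longrightarrow> prune_pair lab x (prune_base x) (prune_target x)"
  using someI_ex[of "\<lambda>p. prune_pair lab x (fst p) (snd p)"]
  by (auto simp: prune_base_def prune_target_def)

fun run :: "nat \<Rightarrow> nat list \<times> nat" where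
  "run 0 = ([], 0)"
| "run (Suc n) = (let (x, t) = run n in
     if leaf N x then (prune_target x, t)
     else if poised (lab x) then (x @ [0], Suc t)
     else (x @ [sat_child x t], t))"

abbreviation node :: "nat \<Rightarrow> nat list" where "node n \<equiv> fst (run n)"
abbreviation time :: "nat \<Rightarrow> nat" where "time n \<equiv> snd (run n)"
abbreviation leaf_at :: "nat \<Rightarrow> bool" where "leaf_at n \<equiv> leaf N (node n)"

lemma run_Suc_leaf: "leaf_at n \<Longrightarrow> node (Suc n) = prune_target (node n) \<and> time (Suc n) = time n"
  by (cases "run n") simp

lemma run_Suc_poised:
  "\<not> leaf_at n \<Longrightarrow> poised (lab (node n)) \<Longrightarrow> node (Suc n) = node n @ [0] \<and> time (Suc n) = Suc (time n)"
  by (cases "run n") simp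

lemma run_Suc_static:
  "\<not> leaf_at n \<Longrightarrow> \<not> poised (lab (node n)) \<Longrightarrow>
     node (Suc n) = node n @ [sat_child (node n) (time n)] \<and> time (Suc n) = time n"
  by (cases "run n") simp

lemma run_sound: "node n \<in> N \<and> models g (suffix (time n) \<sigma>) (lab (node n))"
proof (induction n)
  case 0
  show ?case using root_in root_label model by (simp add: models_def)
next
  case (Suc n)
  then have xN: "node n \<in> N" and x_sat: "models g (suffix (time n) \<sigma>) (lab (node n))" by auto
  show ?case
  proof (cases "leaf_at n")
    case True
    with x_sat have "prune_pair lab (node n) (prune_base (node n)) (prune_target (node n))"
      using crossed_leaf prune_pair_chosen by blast
    then have "prefix (prune_target (node n)) (node n)" and "lab (prune_target (node n)) = lab (node n)"
      by (auto simp: prune_pair_def prefix_order.less_imp_le)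
    with True xN x_sat show ?thesis
      using run_Suc_leaf prefix_in by auto
  next
    case internal: False
    then obtain i where child: "node n @ [i] \<in> N"
      using xN by (auto simp: leaf_def)
    show ?thesis
    proof (cases "poised (lab (node n))")
      case True
      with internal child x_sat show ?thesis
        using run_Suc_poised poised_child models_transition_label by fastforce
    next
      case False
      obtain ls where rule: "rule_applied lab (node n) (Kids ls)" and children: "has_children N lab (node n) ls"
        using child by (rule internal_node)
      with False have "static_step (lab (node n)) (Kids ls)"
        by (simp add: rule_applied_def)
      with x_sat obtain l where "l \<in> set ls" and "models g (suffix (time n) \<sigma>) l"
        using static_step_Kids_sound by blast
      with children have "\<exists>i. node n @ [i] \<in> N \<and> models g (suffix (time n) \<sigma>) (lab (node n @ [i]))"
        by (auto simp: has_children_def in_set_conv_nth)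
      then have "node n @ [sat_child (node n) (time n)] \<in> N \<and>
          models g (suffix (time n) \<sigma>) (lab (node n @ [sat_child (node n) (time n)]))"
        unfolding sat_child_def by (rule LeastI_ex)
      with internal False show ?thesis
        using run_Suc_static by simp
    qed
  qed
qed

lemma leaf_at_pruned:
  assumes "leaf_at n"
  shows "poised (lab (node n))" and "\<not> loop_cond lab (node n)"
    and "prune_pair lab (node n) (prune_base (node n)) (prune_target (node n))"
  using crossed_leaf[OF assms] run_sound prune_pair_chosen by blast+

lemma run_Suc_poised_label:
  assumes "\<not> leaf_at n" and "poised (lab (node n))"
  shows "lab (node (Suc n)) = transition_label (lab (node n))"
proof -
  obtain i where "node n @ [i] \<in> N"
    using assms(1) run_sound by (auto simp: leaf_def)
  with assms show ?thesis
    using run_Suc_poised poised_child by simp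
qed

lemma node_Suc_internal: "\<not> leaf_at n \<Longrightarrow> \<exists>i. node (Suc n) = node n @ [i]"
  using run_Suc_poised run_Suc_static by (cases "poised (lab (node n))") auto

lemma time_mono: "n \<le> m \<Longrightarrow> time n \<le> time m"
proof (rule lift_Suc_mono_le[of time])
  show "time k \<le> time (Suc k)" for k
    using run_Suc_leaf run_Suc_poised run_Suc_static
    by (cases "leaf_at k"; cases "poised (lab (node k))") auto
qed

lemma frequently_leaf_at: "\<exists>n\<ge>m. leaf_at n"
proof (rule ccontr)
  assume no_leaf: "\<not> (\<exists>n\<ge>m. leaf_at n)"
  have length_run: "length (node (m + k)) = length (node m) + k" for k
  proof (induction k)
    case (Suc k)
    from no_leaf obtain i where "node (Suc (m + k)) = node (m + k) @ [i]"
      using node_Suc_internal[of "m + k"] by auto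
    with Suc show ?case by simp
  qed simp
  obtain L where "\<forall>x\<in>N. length x \<le> L"
    using finite_nodes finite_nat_set_iff_bounded_le[of "length ` N"] by auto
  with run_sound have "length (node (m + Suc L)) \<le> L" by blast
  with length_run[of "Suc L"] show False by linarith
qed

lemma after_leaf_poised_step:
  assumes "leaf_at n"
  shows "\<not> leaf_at (Suc n)" and "poised (lab (node (Suc n)))"
proof -
  have target: "strict_prefix (prune_target (node n)) (node n)"
    and "lab (prune_target (node n)) = lab (node n)"
    using leaf_at_pruned(3)[OF assms] by (simp_all add: prune_pair_def)
  then show "poised (lab (node (Suc n)))"
    using run_Suc_leaf[OF assms] leaf_at_pruned(1)[OF assms] by simp
  from target obtain z zs where "node n = prune_target (node n) @ z # zs"
    by (rule strict_prefixE')
  then have "prune_target (node n) @ [z] \<in> N"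
    using prefix_in[of _ "node n"] run_sound by (metis append_Cons append_Nil append_assoc prefixI)
  then show "\<not> leaf_at (Suc n)"
    using run_Suc_leaf[OF assms] by (auto simp: leaf_def)
qed

lemma time_unbounded: "\<exists>n. k \<le> time n"
proof (induction k)
  case (Suc k)
  then obtain n where "k \<le> time n" by blast
  moreover obtain n' where "n \<le> n'" and "leaf_at n'"
    using frequently_leaf_at by blast
  ultimately have "Suc k \<le> time (Suc (Suc n'))"
    using time_mono[of n n'] run_Suc_leaf[of n'] run_Suc_poised[of "Suc n'"]
      after_leaf_poised_step[of n'] by auto
  then show ?case by blast
qed simp

text \<open>The second disjunct allows b at the current time while a U b is still undecomposed.\<close>
definition postponed :: "nat list \<Rightarrow> nat \<Rightarrow> nat \<Rightarrow> bool" where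
  "postponed w T n \<longleftrightarrow> (\<forall>a b. Nxt (Until a b) \<in> lab w \<longrightarrow> \<not> fulfilled lab b w (node n) \<longrightarrow>
     (\<forall>s. T < s \<and> s \<le> time n \<longrightarrow>
        \<not> sat g (suffix s \<sigma>) b \<or> (s = time n \<and> Until a b \<in> lab (node n))))"

lemma postponed_poised_step:
  assumes "postponed w T n" and "prefix w (node n)" and "\<not> leaf_at n" and poised: "poised (lab (node n))"
  shows "postponed w T (Suc n)"
  unfolding postponed_def
proof (intro allI impI)
  fix a b s
  assume ev: "Nxt (Until a b) \<in> lab w" and unf: "\<not> fulfilled lab b w (node (Suc n))"
    and s: "T < s \<and> s \<le> time (Suc n)"
  have step: "node (Suc n) = node n @ [0]" "time (Suc n) = Suc (time n)"
    using run_Suc_poised assms(3) poised by auto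
  then have unf_n: "\<not> fulfilled lab b w (node n)"
    using unf fulfilled_mono_right by fastforce
  show "\<not> sat g (suffix s \<sigma>) b \<or> (s = time (Suc n) \<and> Until a b \<in> lab (node (Suc n)))"
  proof (cases "s \<le> time n")
    case True
    with assms(1) ev unf_n s show ?thesis
      using poised_Until_notin[OF poised] by (auto simp: postponed_def)
  next
    case False
    with s step have "s = time (Suc n)" by simp
    moreover have "Nxt (Until a b) \<in> lab (node n)"
      using pending_eventuality_persists[OF ev assms(2) _ unf_n] run_sound poised_Until_notin[OF poised]
      by blast
    ultimately show ?thesis
      using run_Suc_poised_label[OF assms(3) poised] by (simp add: transition_label_def)
  qed
qed

lemma run_Suc_defers_Until:
  assumes internal: "\<not> leaf_at n" and static: "\<not> poised (lab (node n))"
    and "Until a b \<in> lab (node n)" and "Until a b \<notin> lab (node (Suc n))"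
    and "b \<notin> lab (node (Suc n))"
  shows "\<not> sat g (suffix (time n) \<sigma>) b"
proof -
  define c where "c = sat_child (node n) (time n)"
  have step: "node (Suc n) = node n @ [c]"
    using run_Suc_static[OF internal static] by (simp add: c_def)
  then have cN: "node n @ [c] \<in> N"
    using run_sound[of "Suc n"] by simp
  obtain ls where rule: "rule_applied lab (node n) (Kids ls)" and children: "has_children N lab (node n) ls"
    using cN by (rule internal_node)
  with static have "static_step (lab (node n)) (Kids ls)"
    by (simp add: rule_applied_def)
  with assms(3) assms(4)[unfolded step] cN children
  have ls: "ls = [lab (node n) - {Until a b} \<union> {b}, lab (node n) - {Until a b} \<union> {a, Nxt (Until a b)}]"
    using static_step_removes_Until child_label by blast
  txt \<open>The run skipped the first child, which adds b, so that child was not satisfied.\<close>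
  with children assms(5) step have "c \<noteq> 0"
    by (auto simp: has_children_def)
  then have "\<not> (node n @ [0] \<in> N \<and> models g (suffix (time n) \<sigma>) (lab (node n @ [0])))"
    using not_less_Least unfolding c_def sat_child_def by blast
  moreover have "node n @ [0] \<in> N" and "lab (node n @ [0]) = lab (node n) - {Until a b} \<union> {b}"
    using children ls by (auto simp: has_children_def)
  moreover have "models g (suffix (time n) \<sigma>) (lab (node n))"
    using run_sound by simp
  ultimately show ?thesis
    by (auto simp: models_def)
qed

lemma postponed_static_step:
  assumes "postponed w T n" and "prefix w (node n)" and internal: "\<not> leaf_at n"
    and static: "\<not> poised (lab (node n))"
  shows "postponed w T (Suc n)"
  unfolding postponed_def
proof (intro allI impI)
  fix a b s
  assume ev: "Nxt (Until a b) \<in> lab w" and unf: "\<not> fulfilled lab b w (node (Suc n))"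
    and s: "T < s \<and> s \<le> time (Suc n)"
  have step: "node (Suc n) = node n @ [sat_child (node n) (time n)]" "time (Suc n) = time n"
    using run_Suc_static[OF internal static] by simp_all
  then have unf_n: "\<not> fulfilled lab b w (node n)"
    using unf fulfilled_mono_right by fastforce
  have "strict_prefix w (node (Suc n))"
    using assms(2) step by (auto simp: strict_prefix_def)
  with unf have b_next: "b \<notin> lab (node (Suc n))"
    using fulfilled_at by blast
  from assms(1) ev unf_n s step
  have "\<not> sat g (suffix s \<sigma>) b \<or> (s = time n \<and> Until a b \<in> lab (node n))"
    by (auto simp: postponed_def)
  with step b_next run_Suc_defers_Until[OF internal static, of a b]
  show "\<not> sat g (suffix s \<sigma>) b \<or> (s = time (Suc n) \<and> Until a b \<in> lab (node (Suc n)))"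
    by auto
qed

text \<open>The side condition of PRUNE is what makes jumping back from the leaf to the prune
  target lose no fulfilment below w.\<close>
lemma prune_jump_keeps_unfulfilled:
  assumes leaf: "leaf_at n" and base: "prefix w (prune_base (node n))"
    and ev: "Nxt (Until a b) \<in> lab w" and unf: "\<not> fulfilled lab b w (node (Suc n))"
  shows "\<not> fulfilled lab b w (node n)"
proof
  define x where "x = node n"
  define u where "u = prune_base x"
  define v where "v = prune_target x"
  assume "fulfilled lab b w (node n)"
  then obtain y where "strict_prefix w y" and yx: "prefix y x" and "b \<in> lab y"
    by (auto simp: fulfilled_def x_def)
  have pair: "prune_pair lab x u v"
    using leaf_at_pruned(3)[OF leaf] by (simp add: x_def u_def v_def)
  then have uv: "prefix u v" and vx: "strict_prefix v x" and lab_v: "lab v = lab x"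
    by (simp_all add: prune_pair_def)
  have wu: "prefix w u"
    using base by (simp add: u_def x_def)
  have unf_v: "\<not> fulfilled lab b w v"
    using unf run_Suc_leaf[OF leaf] by (simp add: v_def x_def)
  with \<open>strict_prefix w y\<close> \<open>b \<in> lab y\<close> have "\<not> prefix y v"
    by (auto simp: fulfilled_def)
  with yx vx have "strict_prefix v y"
    using prefix_same_cases prefix_order.less_imp_le prefix_order.le_neq_trans by metis
  with yx \<open>b \<in> lab y\<close> have "fulfilled lab b v x"
    by (auto simp: fulfilled_def)
  moreover have "Nxt (Until a b) \<in> lab x"
    using pending_eventuality_persists[OF ev _ _ unf_v] wu uv lab_v run_sound[of "Suc n"]
      run_Suc_leaf[OF leaf] poised_Until_notin[OF leaf_at_pruned(1)[OF leaf]] prefix_order.trans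
    by (metis v_def x_def)
  ultimately have "fulfilled lab b u v"
    using pair by (auto simp: prune_pair_def)
  with wu unf_v show False
    using fulfilled_mono_left by blast
qed

lemma postponed_leaf_step:
  assumes "postponed w T n" and leaf: "leaf_at n" and "prefix w (prune_base (node n))"
  shows "postponed w T (Suc n)"
  unfolding postponed_def
proof (intro allI impI)
  fix a b s
  assume ev: "Nxt (Until a b) \<in> lab w" and unf: "\<not> fulfilled lab b w (node (Suc n))"
    and s: "T < s \<and> s \<le> time (Suc n)"
  have step: "node (Suc n) = prune_target (node n)" "time (Suc n) = time n"
    using run_Suc_leaf[OF leaf] by simp_all
  moreover have "lab (prune_target (node n)) = lab (node n)"
    using leaf_at_pruned(3)[OF leaf] by (simp add: prune_pair_def)
  moreover have "\<not> fulfilled lab b w (node n)"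
    using prune_jump_keeps_unfulfilled[OF leaf assms(3) ev unf] .
  ultimately show "\<not> sat g (suffix s \<sigma>) b \<or> (s = time (Suc n) \<and> Until a b \<in> lab (node (Suc n)))"
    using assms(1) ev s by (auto simp: postponed_def)
qed

lemma postponed_Suc:
  assumes "postponed w T n" and "prefix w (node n)" and "leaf_at n \<Longrightarrow> prefix w (prune_base (node n))"
  shows "postponed w T (Suc n)"
  using assms postponed_poised_step postponed_static_step postponed_leaf_step by blast

lemma postponed_since_settled:
  assumes "\<And>n. m \<le> n \<Longrightarrow> prefix w (node n)"
    and "\<And>n. m \<le> n \<Longrightarrow> leaf_at n \<Longrightarrow> prefix w (prune_base (node n))"
    and "m \<le> n"
  shows "postponed w (time m) n"
  using assms(3)
proof (induction n rule: dec_induct)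
  case base
  show ?case by (auto simp: postponed_def)
next
  case (step n)
  then show ?case using postponed_Suc assms(1,2) by simp
qed

lemma run_settles_below_base:
  obtains w m where "infinite {n. leaf_at n \<and> prune_base (node n) = w}"
    and "\<And>n. m \<le> n \<Longrightarrow> prefix w (node n)"
    and "\<And>n. m \<le> n \<Longrightarrow> leaf_at n \<Longrightarrow> prefix w (prune_base (node n))"
proof -
  let ?J = "{n. leaf_at n}" and ?base = "\<lambda>n. prune_base (node n)"
  have base_below: "prefix (?base n) (node n)" if "leaf_at n" for n
    using leaf_at_pruned(3)[OF that]
    by (auto simp: prune_pair_def dest: prefix_order.less_imp_le intro: prefix_order.trans)
  then have "?base ` ?J \<subseteq> N"
    using prefix_in run_sound by blast
  then have "finite (?base ` ?J)"
    using finite_nodes finite_subset by blast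
  then obtain K where recurring: "\<And>n. n \<in> ?J \<Longrightarrow> K \<le> n \<Longrightarrow> infinite {m \<in> ?J. ?base m = ?base n}"
    by (rule eventually_recurring) blast
  obtain n0 where "leaf_at n0 \<and> K \<le> n0"
    using frequently_leaf_at by blast
  then obtain n1 where n1: "leaf_at n1" "K \<le> n1"
    and shortest: "\<And>n. leaf_at n \<Longrightarrow> K \<le> n \<Longrightarrow> length (?base n1) \<le> length (?base n)"
    using ex_has_least_nat[of "\<lambda>n. leaf_at n \<and> K \<le> n" n0 "\<lambda>n. length (?base n)"] by blast
  define w where "w = ?base n1"
  have below_base: "prefix w (?base n)" if "n1 \<le> n" "leaf_at n" "prefix w (node n)" for n
    using that n1 shortest base_below prefix_length_prefix unfolding w_def by fastforce
  have below: "prefix w (node n)" if "Suc n1 \<le> n" for n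
    using that
  proof (induction n rule: dec_induct)
    case base
    show ?case
      using leaf_at_pruned(3)[OF n1(1)] run_Suc_leaf[OF n1(1)] by (simp add: prune_pair_def w_def)
  next
    case (step n)
    show ?case
    proof (cases "leaf_at n")
      case True
      with step below_base have "prefix w (?base n)" by simp
      with True show ?thesis
        using leaf_at_pruned(3)[OF True] run_Suc_leaf[OF True]
        by (auto simp: prune_pair_def intro: prefix_order.trans)
    next
      case False
      with step show ?thesis
        using node_Suc_internal by fastforce
    qed
  qed
  show thesis
  proof (rule that)
    show "infinite {n. leaf_at n \<and> prune_base (node n) = w}"
      using recurring[of n1] n1 by (simp add: w_def)
    show "prefix w (node n)" if "Suc n1 \<le> n" for n
      using that by (rule below)
    show "prefix w (prune_base (node n))" if "Suc n1 \<le> n" and "leaf_at n" for n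
      using that below below_base by simp
  qed
qed

lemma recurring_unfulfilled_eventuality:
  assumes "infinite S" and S: "\<And>n. n \<in> S \<Longrightarrow> leaf_at n \<and> prune_base (node n) = w"
  obtains a b where "Nxt (Until a b) \<in> lab w" and "infinite {n \<in> S. \<not> fulfilled lab b w (node n)}"
proof -
  have S_leaf: "poised (lab (node n))" "lab w = lab (node n)" "strict_prefix w (node n)"
    "\<not> loop_cond lab (node n)" if "n \<in> S" for n
    using S[OF that] leaf_at_pruned[of n]
    by (auto simp: prune_pair_def intro: prefix_order.le_less_trans)
  obtain n where "n \<in> S"
    using \<open>infinite S\<close> infinite_imp_nonempty by blast
  then have "w \<in> N"
    using S_leaf(3) run_sound prefix_in prefix_order.less_imp_le by blast
  then have finite_ev: "finite {(a, b). Nxt (Until a b) \<in> lab w}"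
    by (simp add: finite_label finite_eventualities)
  have "\<forall>n\<in>S. \<exists>e\<in>{(a, b). Nxt (Until a b) \<in> lab w}. \<not> fulfilled lab (snd e) w (node n)"
  proof
    fix n assume "n \<in> S"
    then obtain a b where "Nxt (Until a b) \<in> lab w" and "\<not> fulfilled lab b w (node n)"
      using not_loop_cond_unfulfilled[OF S_leaf(4,3,2,1)] by blast
    then show "\<exists>e\<in>{(a, b). Nxt (Until a b) \<in> lab w}. \<not> fulfilled lab (snd e) w (node n)"
      by (intro bexI[of _ "(a, b)"]) simp_all
  qed
  from pigeonhole_infinite_rel[OF \<open>infinite S\<close> finite_ev this]
  obtain e where "e \<in> {(a, b). Nxt (Until a b) \<in> lab w}"
    and "infinite {n \<in> S. \<not> fulfilled lab (snd e) w (node n)}" ..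
  then show thesis
    by (cases e) (auto intro: that)
qed

theorem no_model: False
proof -
  obtain w m where recurring: "infinite {n. leaf_at n \<and> prune_base (node n) = w}"
    and below: "\<And>n. m \<le> n \<Longrightarrow> prefix w (node n)"
    and below_base: "\<And>n. m \<le> n \<Longrightarrow> leaf_at n \<Longrightarrow> prefix w (prune_base (node n))"
    using run_settles_below_base by blast
  define S where "S = {n. leaf_at n \<and> prune_base (node n) = w \<and> m \<le> n}"
  have "S = {n. leaf_at n \<and> prune_base (node n) = w} - {..<m}"
    by (auto simp: S_def)
  with recurring have "infinite S"
    by simp
  moreover have S: "leaf_at n \<and> prune_base (node n) = w" if "n \<in> S" for n
    using that by (simp add: S_def)
  ultimately obtain a b where ev: "Nxt (Until a b) \<in> lab w"
    and unfulfilled: "infinite {n \<in> S. \<not> fulfilled lab b w (node n)}"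
    using recurring_unfulfilled_eventuality by blast
  then obtain n1 where "n1 \<in> S"
    using infinite_imp_nonempty by blast
  then have n1: "leaf_at n1" "prune_base (node n1) = w" "m \<le> n1"
    by (simp_all add: S_def)
  then have "models g (suffix (time n1) \<sigma>) (lab w)"
    using run_sound leaf_at_pruned(3)[OF n1(1)] by (simp add: prune_pair_def)
  with ev have "sat g (suffix (time n1) \<sigma>) (Nxt (Until a b))"
    unfolding models_def by blast
  then obtain k where "time n1 < k" and sat_b: "sat g (suffix k \<sigma>) b"
    by (auto intro: that[of "time n1 + (1 + _)"])
  moreover have "time m \<le> time n1"
    using n1(3) by (rule time_mono)
  moreover obtain n2 where "k \<le> time n2"
    using time_unbounded by blast
  moreover obtain n3 where n3: "n3 \<in> S" "\<not> fulfilled lab b w (node n3)" and "n2 \<le> n3"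
    using unfulfilled unfolding infinite_nat_iff_unbounded_le by blast
  ultimately have "time m < k" and "k \<le> time n3"
    using time_mono le_trans by (simp, blast)
  moreover have "postponed w (time m) n3"
    using postponed_since_settled[OF below below_base] n3(1) by (simp add: S_def)
  ultimately have "\<not> sat g (suffix k \<sigma>) b \<or> Until a b \<in> lab (node n3)"
    using n3(2) ev unfolding postponed_def by blast
  with sat_b n3(1) show False
    using poised_Until_notin leaf_at_pruned(1) by (auto simp: S_def)
qed

end

theorem mainTheorem1:
  fixes \<phi> :: "'a::countable ltl"
  assumes "satisfiable \<phi>"
    and "tableau \<phi> N lab mk"
    and "finished N mk"
  shows "successful N mk"
proof (rule ccontr)
  assume "\<not> successful N mk"
  moreover obtain g :: "nat \<Rightarrow> 'a set" and \<sigma> :: "nat \<Rightarrow> nat" where "sat g \<sigma> \<phi>"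
    using assms(1) unfolding satisfiable_def by blast
  ultimately interpret failed_tableau \<phi> N lab mk g \<sigma>
    using tableau_wf assms(2,3) by unfold_locales
  show False by (rule no_model)
qed

end
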